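(* In a Markov category $\mathcal C$, for all $p\colon A\to X$ and $f,g\colon X\to Y$: if $f$ and $g$ are $p$-dilationally equal, then $f$ and $g$ are $p$-almost surely equal. The converse implication holds for all such $p,f,g$ if and only if $\mathcal C$ is causal.
   Context: A Markov category is a symmetric monoidal category $(\mathcal C,\otimes,I)$ with commutative comonoids $\mathrm{copy}_X\colon X\to X\otimes X$, $\mathrm{del}_X\colon X\to I$ compatible with $\otimes$, with $I$ terminal. A dilation of $p\colon A\to X$ is a morphism $\pi\colon A\to X\otimes E$ with $(\mathrm{id}_X\otimes\mathrm{del}_E)\circ\pi=p$. For $p\colon A\to X$ and $f,g\colon X\to Y$: $f,g$ are $p$-dilationally equal if for every dilation $\pi\colon A\to X\otimes E$ of $p$, $(f\otimes\mathrm{id}_E)\circ\pi=(g\otimes\mathrm{id}_E)\circ\pi$; they are $p$-almost surely equal if $(\mathrm{id}_X\otimes f)\circ\mathrm{copy}_X\circ p=(\mathrm{id}_X\otimes g)\circ\mathrm{copy}_X\circ p$. $\mathcal C$ is causal if for all $f\colon A\to W$, $g\colon W\to X$, $h_1,h_2\colon X\to Y$ with $(\mathrm{id}_X\otimes h_1)\circ\mathrm{copy}_X\circ g\circ f=(\mathrm{id}_X\otimes h_2)\circ\mathrm{copy}_X\circ g\circ f$, also $\big(\mathrm{id}_W\otimes((\mathrm{id}_X\otimes h_1)\circ\mathrm{copy}_X\circ g)\big)\circ\mathrm{copy}_W\circ f=\big(\mathrm{id}_W\otimes((\mathrm{id}_X\otimes h_2)\circ\mathrm{copy}_X\circ g)\big)\circ\mathrm{copy}_W\circ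 f$. *)

theory Defs
  imports Main
begin

text \<open>Objects are the
elements of type 'o, morphisms the elements of type 'm; composition is
mcomp C g f = g after f (only meaningful when cod f = dom g).\<close>

record ('o, 'm) mcat =
  mdom :: "'m \<Rightarrow> 'o"
  mcod :: "'m \<Rightarrow> 'o"
  mid :: "'o \<Rightarrow> 'm"
  mcomp :: "'m \<Rightarrow> 'm \<Rightarrow> 'm"
  otens :: "'o \<Rightarrow> 'o \<Rightarrow> 'o"
  mtens :: "'m \<Rightarrow> 'm \<Rightarrow> 'm"
  unit_obj :: "'o"
  assoc :: "'o \<Rightarrow> 'o \<Rightarrow> 'o \<Rightarrow> 'm"
  lunit :: "'o \<Rightarrow> 'm"
  runit :: "'o \<Rightarrow> 'm"
  braid :: "'o \<Rightarrow> 'o \<Rightarrow> 'm"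
  mcopy :: "'o \<Rightarrow> 'm"
  mdel :: "'o \<Rightarrow> 'm"

definition hom :: "('o, 'm, 'z) mcat_scheme \<Rightarrow> 'o \<Rightarrow> 'o \<Rightarrow> 'm set" where
  "hom C A B = {f. mdom C f = A \<and> mcod C f = B}"

definition is_category :: "('o, 'm, 'z) mcat_scheme \<Rightarrow> bool" where
  "is_category C \<longleftrightarrow>
     (\<forall>A. mid C A \<in> hom C A A) \<and>
     (\<forall>f g. mcod C f = mdom C g \<longrightarrow> mcomp C g f \<in> hom C (mdom C f) (mcod C g)) \<and>
     (\<forall>f. mcomp C f (mid C (mdom C f)) = f \<and> mcomp C (mid C (mcod C f)) f = f) \<and>
     (\<forall>f g h. mcod C f = mdom C g \<and> mcod C g = mdom C h \<longrightarrow>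
        mcomp C h (mcomp C g f) = mcomp C (mcomp C h g) f)"

definition is_iso :: "('o, 'm, 'z) mcat_scheme \<Rightarrow> 'm \<Rightarrow> bool" where
  "is_iso C f \<longleftrightarrow> (\<exists>g. g \<in> hom C (mcod C f) (mdom C f) \<and>
      mcomp C g f = mid C (mdom C f) \<and> mcomp C f g = mid C (mcod C f))"

definition inv_arr :: "('o, 'm, 'z) mcat_scheme \<Rightarrow> 'm \<Rightarrow> 'm" where
  "inv_arr C f = (SOME g. g \<in> hom C (mcod C f) (mdom C f) \<and>
      mcomp C g f = mid C (mdom C f) \<and> mcomp C f g = mid C (mcod C f))"

definition is_symmetric_monoidal :: "('o, 'm, 'z) mcat_scheme \<Rightarrow> bool" where
  "is_symmetric_monoidal C \<longleftrightarrow> is_category C \<and>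
     \<comment> \<open>tensor is a bifunctor\<close>
     (\<forall>f g. mtens C f g \<in> hom C (otens C (mdom C f) (mdom C g)) (otens C (mcod C f) (mcod C g))) \<and>
     (\<forall>A B. mtens C (mid C A) (mid C B) = mid C (otens C A B)) \<and>
     (\<forall>f g f' g'. mcod C f = mdom C g \<and> mcod C f' = mdom C g' \<longrightarrow>
        mtens C (mcomp C g f) (mcomp C g' f') = mcomp C (mtens C g g') (mtens C f f')) \<and>
     \<comment> \<open>associator, unitors, braiding: typing and invertibility\<close>
     (\<forall>A B D. assoc C A B D \<in> hom C (otens C (otens C A B) D) (otens C A (otens C B D))
              \<and> is_iso C (assoc C A B D)) \<and>
     (\<forall>A. lunit C A \<in> hom C (otens C (unit_obj C) A) A \<and> is_iso C (lunit C A)) \<and>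
     (\<forall>A. runit C A \<in> hom C (otens C A (unit_obj C)) A \<and> is_iso C (runit C A)) \<and>
     (\<forall>A B. braid C A B \<in> hom C (otens C A B) (otens C B A)) \<and>
     \<comment> \<open>naturality\<close>
     (\<forall>f1 f2 f3. mcomp C (assoc C (mcod C f1) (mcod C f2) (mcod C f3)) (mtens C (mtens C f1 f2) f3)
        = mcomp C (mtens C f1 (mtens C f2 f3)) (assoc C (mdom C f1) (mdom C f2) (mdom C f3))) \<and>
     (\<forall>f. mcomp C (lunit C (mcod C f)) (mtens C (mid C (unit_obj C)) f) = mcomp C f (lunit C (mdom C f))) \<and>
     (\<forall>f. mcomp C (runit C (mcod C f)) (mtens C f (mid C (unit_obj C))) = mcomp C f (runit C (mdom C f))) \<and>
     (\<forall>f g. mcomp C (braid C (mcod C f) (mcod C g)) (mtens C f g)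
        = mcomp C (mtens C g f) (braid C (mdom C f) (mdom C g))) \<and>
     \<comment> \<open>pentagon and triangle\<close>
     (\<forall>A B D E. mcomp C (mtens C (mid C A) (assoc C B D E))
                   (mcomp C (assoc C A (otens C B D) E) (mtens C (assoc C A B D) (mid C E)))
        = mcomp C (assoc C A B (otens C D E)) (assoc C (otens C A B) D E)) \<and>
     (\<forall>A B. mcomp C (mtens C (mid C A) (lunit C B)) (assoc C A (unit_obj C) B)
        = mtens C (runit C A) (mid C B)) \<and>
     \<comment> \<open>symmetry and hexagon\<close>
     (\<forall>A B. mcomp C (braid C B A) (braid C A B) = mid C (otens C A B)) \<and>
     (\<forall>A B D. mcomp C (assoc C B D A) (mcomp C (braid C A (otens C B D)) (assoc C A B D))
        = mcomp C (mtens C (mid C B) (braid C A D))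
            (mcomp C (assoc C B A D) (mtens C (braid C A B) (mid C D))))"

definition is_markov_category :: "('o, 'm, 'z) mcat_scheme \<Rightarrow> bool" where
  "is_markov_category C \<longleftrightarrow> is_symmetric_monoidal C \<and>
     (\<forall>A. mcopy C A \<in> hom C A (otens C A A) \<and> mdel C A \<in> hom C A (unit_obj C)) \<and>
     \<comment> \<open>coassociativity\<close>
     (\<forall>A. mcomp C (assoc C A A A) (mcomp C (mtens C (mcopy C A) (mid C A)) (mcopy C A))
        = mcomp C (mtens C (mid C A) (mcopy C A)) (mcopy C A)) \<and>
     \<comment> \<open>counitality\<close>
     (\<forall>A. mcomp C (lunit C A) (mcomp C (mtens C (mdel C A) (mid C A)) (mcopy C A)) = mid C A) \<and>
     (\<forall>A. mcomp C (runit C A) (mcomp C (mtens C (mid C A) (mdel C A)) (mcopy C A)) = mid C A) \<and>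
     \<comment> \<open>commutativity\<close>
     (\<forall>A. mcomp C (braid C A A) (mcopy C A) = mcopy C A) \<and>
     \<comment> \<open>compatibility with the monoidal structure\<close>
     (\<forall>A B. mcopy C (otens C A B) =
        mcomp C (inv_arr C (assoc C A B (otens C A B)))
         (mcomp C (mtens C (mid C A) (assoc C B A B))
          (mcomp C (mtens C (mid C A) (mtens C (braid C A B) (mid C B)))
           (mcomp C (mtens C (mid C A) (inv_arr C (assoc C A B B)))
            (mcomp C (assoc C A A (otens C B B))
             (mtens C (mcopy C A) (mcopy C B))))))) \<and>
     (\<forall>A B. mdel C (otens C A B) = mcomp C (lunit C (unit_obj C)) (mtens C (mdel C A) (mdel C B))) \<and>
     mcopy C (unit_obj C) = inv_arr C (lunit C (unit_obj C)) \<and>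
     mdel C (unit_obj C) = mid C (unit_obj C) \<and>
     \<comment> \<open>the unit is terminal\<close>
     (\<forall>A f. f \<in> hom C A (unit_obj C) \<longrightarrow> f = mdel C A)"

definition dilation :: "('o, 'm, 'z) mcat_scheme \<Rightarrow> 'm \<Rightarrow> 'o \<Rightarrow> 'm \<Rightarrow> bool" where
  "dilation C p E pi \<longleftrightarrow> pi \<in> hom C (mdom C p) (otens C (mcod C p) E) \<and>
     mcomp C (runit C (mcod C p)) (mcomp C (mtens C (mid C (mcod C p)) (mdel C E)) pi) = p"

definition dil_eq :: "('o, 'm, 'z) mcat_scheme \<Rightarrow> 'm \<Rightarrow> 'm \<Rightarrow> 'm \<Rightarrow> bool" where
  "dil_eq C p f g \<longleftrightarrow> (\<forall>E pi. dilation C p E pi \<longrightarrow>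
     mcomp C (mtens C f (mid C E)) pi = mcomp C (mtens C g (mid C E)) pi)"

definition as_eq :: "('o, 'm, 'z) mcat_scheme \<Rightarrow> 'm \<Rightarrow> 'm \<Rightarrow> 'm \<Rightarrow> bool" where
  "as_eq C p f g \<longleftrightarrow>
     mcomp C (mtens C (mid C (mcod C p)) f) (mcomp C (mcopy C (mcod C p)) p)
   = mcomp C (mtens C (mid C (mcod C p)) g) (mcomp C (mcopy C (mcod C p)) p)"

definition causal :: "('o, 'm, 'z) mcat_scheme \<Rightarrow> bool" where
  "causal C \<longleftrightarrow> (\<forall>A W X Y f g h1 h2.
     f \<in> hom C A W \<and> g \<in> hom C W X \<and> h1 \<in> hom C X Y \<and> h2 \<in> hom C X Y \<and>
     mcomp C (mtens C (mid C X) h1) (mcomp C (mcopy C X) (mcomp C g f))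
       = mcomp C (mtens C (mid C X) h2) (mcomp C (mcopy C X) (mcomp C g f))
     \<longrightarrow>
     mcomp C (mtens C (mid C W) (mcomp C (mtens C (mid C X) h1) (mcomp C (mcopy C X) g)))
        (mcomp C (mcopy C W) f)
       = mcomp C (mtens C (mid C W) (mcomp C (mtens C (mid C X) h2) (mcomp C (mcopy C X) g)))
        (mcomp C (mcopy C W) f))"

end

theory Submission
  imports Defs
begin

(* The copy morphism copy X \<cdot> p is itself a dilation of p, and for it dilational equality
   is almost sure equality up to a braiding; this gives the first claim.

   If C is causal and \<pi> : A \<rightarrow> X \<otimes> E is a dilation of p, apply causality to \<pi> followed
   by the first marginal X \<otimes> E \<rightarrow> X: the graphs of f and g become equal even alongside a
   copy of X \<otimes> E. Taking the E-marginal of that copy and the output of the graph yields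
   (f \<otimes> id) \<cdot> \<pi> up to a braiding, because copying a state on X \<otimes> E and taking one
   marginal of each copy gives back the state.

   Conversely, for f : A \<rightarrow> W and g : W \<rightarrow> X the morphism
   \<alpha> \<cdot> ((copy X \<cdot> g) \<otimes> id W) \<cdot> copy W \<cdot> f is a dilation of g \<cdot> f that keeps a copy of both W
   and X; applying h to its X-output gives, up to braidings and an associator, the two sides
   of the conclusion of causality. *)

locale markov_category =
  fixes C :: "('o, 'm) mcat"
  assumes markov: "is_markov_category C"
begin

abbreviation comp (infixr "\<cdot>" 55) where "g \<cdot> f \<equiv> mcomp C g f"
abbreviation tensor (infixr "\<otimes>" 60) where "f \<otimes> g \<equiv> mtens C f g"
abbreviation tensor_obj (infixr "\<otimes>\<^sub>o" 65) where "A \<otimes>\<^sub>o B \<equiv> otens C A B"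
abbreviation src where "src \<equiv> mdom C"
abbreviation tgt where "tgt \<equiv> mcod C"
abbreviation ident ("\<one>") where "\<one> \<equiv> mid C"
abbreviation I where "I \<equiv> unit_obj C"
abbreviation copy where "copy \<equiv> mcopy C"
abbreviation del where "del \<equiv> mdel C"

lemma symmetric_monoidal: "is_symmetric_monoidal C"
  using markov unfolding is_markov_category_def by blast

lemma category: "is_category C"
  using symmetric_monoidal unfolding is_symmetric_monoidal_def by blast

lemma src_id [simp]: "src (\<one> A) = A" and tgt_id [simp]: "tgt (\<one> A) = A"
  using category unfolding is_category_def hom_def by auto

lemma src_comp [simp]: "tgt f = src g \<Longrightarrow> src (g \<cdot> f) = src f"
  and tgt_comp [simp]: "tgt f = src g \<Longrightarrow> tgt (g \<cdot> f) = tgt g"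
  using category unfolding is_category_def hom_def by auto

lemma comp_id [simp]: "src f = A \<Longrightarrow> f \<cdot> \<one> A = f"
  and id_comp [simp]: "tgt f = A \<Longrightarrow> \<one> A \<cdot> f = f"
  using category unfolding is_category_def by auto

lemma comp_assoc [simp]: "tgt f = src g \<Longrightarrow> tgt g = src h \<Longrightarrow> (h \<cdot> g) \<cdot> f = h \<cdot> g \<cdot> f"
  using category unfolding is_category_def by metis

lemma src_tensor [simp]: "src (f \<otimes> g) = src f \<otimes>\<^sub>o src g"
  and tgt_tensor [simp]: "tgt (f \<otimes> g) = tgt f \<otimes>\<^sub>o tgt g"
  using symmetric_monoidal unfolding is_symmetric_monoidal_def hom_def by auto

lemma tensor_id [simp]: "\<one> A \<otimes> \<one> B = \<one> (A \<otimes>\<^sub>o B)"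
  using symmetric_monoidal unfolding is_symmetric_monoidal_def by metis

lemma interchange:
  "tgt f = src g \<Longrightarrow> tgt f' = src g' \<Longrightarrow> (g \<cdot> f) \<otimes> (g' \<cdot> f') = (g \<otimes> g') \<cdot> (f \<otimes> f')"
  using symmetric_monoidal unfolding is_symmetric_monoidal_def by metis

lemma src_assoc [simp]: "src (assoc C A B D) = (A \<otimes>\<^sub>o B) \<otimes>\<^sub>o D"
  and tgt_assoc [simp]: "tgt (assoc C A B D) = A \<otimes>\<^sub>o (B \<otimes>\<^sub>o D)"
  and iso_assoc: "is_iso C (assoc C A B D)"
  using symmetric_monoidal unfolding is_symmetric_monoidal_def hom_def by auto

lemma src_lunit [simp]: "src (lunit C A) = I \<otimes>\<^sub>o A"
  and tgt_lunit [simp]: "tgt (lunit C A) = A"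
  and iso_lunit: "is_iso C (lunit C A)"
  using symmetric_monoidal unfolding is_symmetric_monoidal_def hom_def by auto

lemma src_runit [simp]: "src (runit C A) = A \<otimes>\<^sub>o I"
  and tgt_runit [simp]: "tgt (runit C A) = A"
  using symmetric_monoidal unfolding is_symmetric_monoidal_def hom_def by auto

lemma src_braid [simp]: "src (braid C A B) = A \<otimes>\<^sub>o B"
  and tgt_braid [simp]: "tgt (braid C A B) = B \<otimes>\<^sub>o A"
  using symmetric_monoidal unfolding is_symmetric_monoidal_def hom_def by auto

lemma assoc_natural:
  "assoc C (tgt f) (tgt g) (tgt h) \<cdot> ((f \<otimes> g) \<otimes> h) = (f \<otimes> (g \<otimes> h)) \<cdot> assoc C (src f) (src g) (src h)"
  using symmetric_monoidal unfolding is_symmetric_monoidal_def by metis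

lemma lunit_natural: "lunit C (tgt f) \<cdot> (\<one> I \<otimes> f) = f \<cdot> lunit C (src f)"
  using symmetric_monoidal unfolding is_symmetric_monoidal_def by metis

lemma runit_natural: "runit C (tgt f) \<cdot> (f \<otimes> \<one> I) = f \<cdot> runit C (src f)"
  using symmetric_monoidal unfolding is_symmetric_monoidal_def by metis

lemma braid_natural: "braid C (tgt f) (tgt g) \<cdot> (f \<otimes> g) = (g \<otimes> f) \<cdot> braid C (src f) (src g)"
  using symmetric_monoidal unfolding is_symmetric_monoidal_def by metis

lemma triangle: "(\<one> A \<otimes> lunit C B) \<cdot> assoc C A I B = runit C A \<otimes> \<one> B"
  using symmetric_monoidal unfolding is_symmetric_monoidal_def by metis

lemma braid_braid: "braid C B A \<cdot> braid C A B = \<one> (A \<otimes>\<^sub>o B)"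
  using symmetric_monoidal unfolding is_symmetric_monoidal_def by metis

lemma src_copy [simp]: "src (copy A) = A" and tgt_copy [simp]: "tgt (copy A) = A \<otimes>\<^sub>o A"
  and src_del [simp]: "src (del A) = A" and tgt_del [simp]: "tgt (del A) = I"
  using markov unfolding is_markov_category_def hom_def by auto

lemma copy_counit_left: "lunit C A \<cdot> (del A \<otimes> \<one> A) \<cdot> copy A = \<one> A"
  and copy_counit_right: "runit C A \<cdot> (\<one> A \<otimes> del A) \<cdot> copy A = \<one> A"
  and braid_copy: "braid C A A \<cdot> copy A = copy A"
  using markov unfolding is_markov_category_def by auto

lemma del_unique: "src f = A \<Longrightarrow> tgt f = I \<Longrightarrow> f = del A"
  using markov unfolding is_markov_category_def hom_def by blast

lemma inv_arr_props:
  assumes "is_iso C f"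
  shows "src (inv_arr C f) = tgt f" "tgt (inv_arr C f) = src f"
    "inv_arr C f \<cdot> f = \<one> (src f)" "f \<cdot> inv_arr C f = \<one> (tgt f)"
proof -
  have "\<exists>g. g \<in> hom C (tgt f) (src f) \<and> g \<cdot> f = \<one> (src f) \<and> f \<cdot> g = \<one> (tgt f)"
    using assms unfolding is_iso_def by blast
  then have "inv_arr C f \<in> hom C (tgt f) (src f) \<and>
      inv_arr C f \<cdot> f = \<one> (src f) \<and> f \<cdot> inv_arr C f = \<one> (tgt f)"
    unfolding inv_arr_def by (rule someI_ex)
  then show "src (inv_arr C f) = tgt f" "tgt (inv_arr C f) = src f"
    "inv_arr C f \<cdot> f = \<one> (src f)" "f \<cdot> inv_arr C f = \<one> (tgt f)"
    unfolding hom_def by auto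
qed

lemma src_assoc_inv [simp]: "src (inv_arr C (assoc C A B D)) = A \<otimes>\<^sub>o (B \<otimes>\<^sub>o D)"
  and tgt_assoc_inv [simp]: "tgt (inv_arr C (assoc C A B D)) = (A \<otimes>\<^sub>o B) \<otimes>\<^sub>o D"
  and assoc_inv_assoc: "inv_arr C (assoc C A B D) \<cdot> assoc C A B D = \<one> ((A \<otimes>\<^sub>o B) \<otimes>\<^sub>o D)"
  and assoc_assoc_inv: "assoc C A B D \<cdot> inv_arr C (assoc C A B D) = \<one> (A \<otimes>\<^sub>o (B \<otimes>\<^sub>o D))"
  using inv_arr_props[OF iso_assoc, of A B D] by auto

lemma src_lunit_inv [simp]: "src (inv_arr C (lunit C A)) = A"
  and tgt_lunit_inv [simp]: "tgt (inv_arr C (lunit C A)) = I \<otimes>\<^sub>o A"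
  and lunit_inv_lunit: "inv_arr C (lunit C A) \<cdot> lunit C A = \<one> (I \<otimes>\<^sub>o A)"
  using inv_arr_props[OF iso_lunit, of A] by auto

lemma comp_eq_precomp: "x \<cdot> y = z \<Longrightarrow> tgt k = src y \<Longrightarrow> tgt y = src x \<Longrightarrow> x \<cdot> y \<cdot> k = z \<cdot> k"
  using comp_assoc[of k y x] by simp

lemma comp2_eq_precomp:
  "a \<cdot> b = c \<cdot> d \<Longrightarrow> tgt k = src b \<Longrightarrow> tgt k = src d \<Longrightarrow> tgt b = src a \<Longrightarrow> tgt d = src c
   \<Longrightarrow> a \<cdot> b \<cdot> k = c \<cdot> d \<cdot> k"
  using comp_assoc[of k b a] comp_assoc[of k d c] by simp

lemma split_mono_cancel:
  assumes "v \<cdot> u = \<one> A" "u \<cdot> x = u \<cdot> y" "src u = A" "tgt u = src v" "tgt x = A" "tgt y = A"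
  shows "x = y"
proof -
  have "x = v \<cdot> u \<cdot> x" using comp_eq_precomp[OF assms(1), of x] assms(3-5) by simp
  also have "\<dots> = v \<cdot> u \<cdot> y" using assms(2) by simp
  also have "\<dots> = y" using comp_eq_precomp[OF assms(1), of y] assms(3,4,6) by simp
  finally show ?thesis .
qed

lemma id_tensor_comp: "tgt f = src g \<Longrightarrow> \<one> A \<otimes> (g \<cdot> f) = (\<one> A \<otimes> g) \<cdot> (\<one> A \<otimes> f)"
  using interchange[of "\<one> A" "\<one> A" f g] by simp

lemma comp_tensor_id: "tgt f = src g \<Longrightarrow> (g \<cdot> f) \<otimes> \<one> A = (g \<otimes> \<one> A) \<cdot> (f \<otimes> \<one> A)"
  using interchange[of f g "\<one> A" "\<one> A"] by simp

lemma tensor_commute_right: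
  assumes "u \<cdot> x = y \<cdot> v" "tgt x = src u" "tgt v = src y"
  shows "(\<one> (tgt f) \<otimes> u) \<cdot> (f \<otimes> x) = (f \<otimes> y) \<cdot> (\<one> (src f) \<otimes> v)"
  using interchange[of f "\<one> (tgt f)" x u] interchange[of "\<one> (src f)" f v y] assms by simp

lemma tensor_commute_left:
  assumes "u \<cdot> x = y \<cdot> v" "tgt x = src u" "tgt v = src y"
  shows "(u \<otimes> \<one> (tgt f)) \<cdot> (x \<otimes> f) = (y \<otimes> f) \<cdot> (v \<otimes> \<one> (src f))"
  using interchange[of x u f "\<one> (tgt f)"] interchange[of v y "\<one> (src f)" f] assms by simp

lemma copy_swap:
  assumes "src u = W"
  shows "(u \<otimes> \<one> W) \<cdot> copy W = braid C W (tgt u) \<cdot> (\<one> W \<otimes> u) \<cdot> copy W"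
proof -
  have "braid C W (tgt u) \<cdot> (\<one> W \<otimes> u) \<cdot> copy W = (u \<otimes> \<one> W) \<cdot> braid C W W \<cdot> copy W"
    using comp_eq_precomp[OF braid_natural[of "\<one> W" u], of "copy W"] assms by simp
  then show ?thesis
    using braid_copy[of W] by simp
qed

definition middle_swap :: "'o \<Rightarrow> 'o \<Rightarrow> 'o \<Rightarrow> 'o \<Rightarrow> 'm" where
  "middle_swap A A' B B' =
     inv_arr C (assoc C A B (A' \<otimes>\<^sub>o B')) \<cdot> (\<one> A \<otimes> assoc C B A' B') \<cdot> (\<one> A \<otimes> (braid C A' B \<otimes> \<one> B'))
     \<cdot> (\<one> A \<otimes> inv_arr C (assoc C A' B B')) \<cdot> assoc C A A' (B \<otimes>\<^sub>o B')"

lemma src_middle_swap [simp]: "src (middle_swap A A' B B') = (A \<otimes>\<^sub>o A') \<otimes>\<^sub>o (B \<otimes>\<^sub>o B')"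
  and tgt_middle_swap [simp]: "tgt (middle_swap A A' B B') = (A \<otimes>\<^sub>o B) \<otimes>\<^sub>o (A' \<otimes>\<^sub>o B')"
  unfolding middle_swap_def by simp_all

lemma copy_tensor: "copy (A \<otimes>\<^sub>o B) = middle_swap A A B B \<cdot> (copy A \<otimes> copy B)"
  using markov unfolding is_markov_category_def middle_swap_def by simp

lemma assoc_inv_natural:
  "((f \<otimes> g) \<otimes> h) \<cdot> inv_arr C (assoc C (src f) (src g) (src h))
   = inv_arr C (assoc C (tgt f) (tgt g) (tgt h)) \<cdot> (f \<otimes> (g \<otimes> h))"
proof -
  let ?a = "assoc C (src f) (src g) (src h)" and ?b = "assoc C (tgt f) (tgt g) (tgt h)"
  have "((f \<otimes> g) \<otimes> h) \<cdot> inv_arr C ?a = inv_arr C ?b \<cdot> ?b \<cdot> ((f \<otimes> g) \<otimes> h) \<cdot> inv_arr C ?a"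
    using comp_eq_precomp[OF assoc_inv_assoc, of "((f \<otimes> g) \<otimes> h) \<cdot> inv_arr C ?a"] by simp
  also have "\<dots> = inv_arr C ?b \<cdot> (f \<otimes> (g \<otimes> h)) \<cdot> ?a \<cdot> inv_arr C ?a"
    by (subst comp2_eq_precomp[OF assoc_natural]) simp_all
  also have "\<dots> = inv_arr C ?b \<cdot> (f \<otimes> (g \<otimes> h))"
    by (simp add: assoc_assoc_inv)
  finally show ?thesis .
qed

lemma middle_swap_natural:
  "middle_swap (tgt f) (tgt f') (tgt g) (tgt g') \<cdot> ((f \<otimes> f') \<otimes> (g \<otimes> g'))
   = ((f \<otimes> g) \<otimes> (f' \<otimes> g')) \<cdot> middle_swap (src f) (src f') (src g) (src g')"
proof -
  have 1: "assoc C (tgt f) (tgt f') (tgt g \<otimes>\<^sub>o tgt g') \<cdot> ((f \<otimes> f') \<otimes> (g \<otimes> g'))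
      = (f \<otimes> (f' \<otimes> (g \<otimes> g'))) \<cdot> assoc C (src f) (src f') (src g \<otimes>\<^sub>o src g')"
    using assoc_natural[of f f' "g \<otimes> g'"] by simp
  have 2: "(\<one> (tgt f) \<otimes> inv_arr C (assoc C (tgt f') (tgt g) (tgt g'))) \<cdot> (f \<otimes> (f' \<otimes> (g \<otimes> g')))
      = (f \<otimes> ((f' \<otimes> g) \<otimes> g')) \<cdot> (\<one> (src f) \<otimes> inv_arr C (assoc C (src f') (src g) (src g')))"
    by (rule tensor_commute_right[OF assoc_inv_natural[symmetric]]) simp_all
  have 3: "(\<one> (tgt f) \<otimes> (braid C (tgt f') (tgt g) \<otimes> \<one> (tgt g'))) \<cdot> (f \<otimes> ((f' \<otimes> g) \<otimes> g'))
      = (f \<otimes> ((g \<otimes> f') \<otimes> g')) \<cdot> (\<one> (src f) \<otimes> (braid C (src f') (src g) \<otimes> \<one> (src g')))"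
    using tensor_commute_right[OF tensor_commute_left[OF braid_natural]] by simp
  have 4: "(\<one> (tgt f) \<otimes> assoc C (tgt g) (tgt f') (tgt g')) \<cdot> (f \<otimes> ((g \<otimes> f') \<otimes> g'))
      = (f \<otimes> (g \<otimes> (f' \<otimes> g'))) \<cdot> (\<one> (src f) \<otimes> assoc C (src g) (src f') (src g'))"
    by (rule tensor_commute_right[OF assoc_natural]) simp_all
  have 5: "inv_arr C (assoc C (tgt f) (tgt g) (tgt f' \<otimes>\<^sub>o tgt g')) \<cdot> (f \<otimes> (g \<otimes> (f' \<otimes> g')))
      = ((f \<otimes> g) \<otimes> (f' \<otimes> g')) \<cdot> inv_arr C (assoc C (src f) (src g) (src f' \<otimes>\<^sub>o src g'))"
    using assoc_inv_natural[of f g "f' \<otimes> g'"] by simp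
  show ?thesis
    unfolding middle_swap_def
    by (simp add: comp2_eq_precomp[OF 1] comp2_eq_precomp[OF 2] comp2_eq_precomp[OF 3]
        comp2_eq_precomp[OF 4] comp2_eq_precomp[OF 5] 1)
qed

lemma braid_unit_unit: "braid C I I = \<one> (I \<otimes>\<^sub>o I)"
proof -
  have "lunit C I \<cdot> braid C I I = lunit C I"
    using del_unique[of "lunit C I \<cdot> braid C I I" "I \<otimes>\<^sub>o I"] del_unique[of "lunit C I" "I \<otimes>\<^sub>o I"]
    by simp
  then have "inv_arr C (lunit C I) \<cdot> lunit C I \<cdot> braid C I I = inv_arr C (lunit C I) \<cdot> lunit C I"
    by simp
  then show ?thesis
    using comp_eq_precomp[OF lunit_inv_lunit[of I], of "braid C I I"] lunit_inv_lunit[of I] by simp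
qed

lemma middle_swap_units: "middle_swap X I I E = \<one> ((X \<otimes>\<^sub>o I) \<otimes>\<^sub>o (I \<otimes>\<^sub>o E))"
proof -
  have "(\<one> X \<otimes> assoc C I I E) \<cdot> (\<one> X \<otimes> inv_arr C (assoc C I I E)) = \<one> (X \<otimes>\<^sub>o (I \<otimes>\<^sub>o (I \<otimes>\<^sub>o E)))"
    using id_tensor_comp[of "inv_arr C (assoc C I I E)" "assoc C I I E" X] by (simp add: assoc_assoc_inv)
  then show ?thesis
    unfolding middle_swap_def braid_unit_unit
    by (simp add: comp_eq_precomp assoc_inv_assoc)
qed

definition proj1 :: "'o \<Rightarrow> 'o \<Rightarrow> 'm" where
  "proj1 X E = runit C X \<cdot> (\<one> X \<otimes> del E)"

definition proj2 :: "'o \<Rightarrow> 'o \<Rightarrow> 'm" where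
  "proj2 X E = lunit C E \<cdot> (del X \<otimes> \<one> E)"

lemma src_proj1 [simp]: "src (proj1 X E) = X \<otimes>\<^sub>o E" and tgt_proj1 [simp]: "tgt (proj1 X E) = X"
  and src_proj2 [simp]: "src (proj2 X E) = X \<otimes>\<^sub>o E" and tgt_proj2 [simp]: "tgt (proj2 X E) = E"
  unfolding proj1_def proj2_def by simp_all

lemma dilation_iff:
  "dilation C p E \<pi> \<longleftrightarrow> \<pi> \<in> hom C (src p) (tgt p \<otimes>\<^sub>o E) \<and> proj1 (tgt p) E \<cdot> \<pi> = p"
  unfolding dilation_def proj1_def hom_def by auto

lemma proj1_copy: "proj1 X X \<cdot> copy X = \<one> X"
  using copy_counit_right unfolding proj1_def by simp

lemma proj2_copy: "proj2 X X \<cdot> copy X = \<one> X"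
  using copy_counit_left unfolding proj2_def by simp

lemma proj1_natural: "proj1 (tgt u) E \<cdot> (u \<otimes> \<one> E) = u \<cdot> proj1 (src u) E"
proof -
  have "(\<one> (tgt u) \<otimes> del E) \<cdot> (u \<otimes> \<one> E) = (u \<otimes> \<one> I) \<cdot> (\<one> (src u) \<otimes> del E)"
    using interchange[of u "\<one> (tgt u)" "\<one> E" "del E"] interchange[of "\<one> (src u)" u "del E" "\<one> I"]
    by simp
  then show ?thesis
    unfolding proj1_def using comp2_eq_precomp[OF runit_natural[of u], of "\<one> (src u) \<otimes> del E"]
    by simp
qed

lemma proj2_natural: "proj2 X (tgt u) \<cdot> (\<one> X \<otimes> u) = u \<cdot> proj2 X (src u)"
proof -
  have "(del X \<otimes> \<one> (tgt u)) \<cdot> (\<one> X \<otimes> u) = (\<one> I \<otimes> u) \<cdot> (del X \<otimes> \<one> (src u))"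
    using interchange[of "\<one> X" "del X" u "\<one> (tgt u)"] interchange[of "del X" "\<one> I" "\<one> (src u)" u]
    by simp
  then show ?thesis
    unfolding proj2_def using comp2_eq_precomp[OF lunit_natural[of u], of "del X \<otimes> \<one> (src u)"]
    by simp
qed

lemma proj_tensor_copy: "(proj1 X E \<otimes> proj2 X E) \<cdot> copy (X \<otimes>\<^sub>o E) = \<one> (X \<otimes>\<^sub>o E)"
proof -
  have split: "proj1 X E \<otimes> proj2 X E = (runit C X \<otimes> lunit C E) \<cdot> ((\<one> X \<otimes> del E) \<otimes> (del X \<otimes> \<one> E))"
    unfolding proj1_def proj2_def by (simp add: interchange)
  have swap: "((\<one> X \<otimes> del E) \<otimes> (del X \<otimes> \<one> E)) \<cdot> middle_swap X X E E
      = (\<one> X \<otimes> del X) \<otimes> (del E \<otimes> \<one> E)"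
    using middle_swap_natural[of "\<one> X" "del X" "del E" "\<one> E"] by (simp add: middle_swap_units)
  have "(proj1 X E \<otimes> proj2 X E) \<cdot> copy (X \<otimes>\<^sub>o E)
      = (runit C X \<otimes> lunit C E) \<cdot> ((\<one> X \<otimes> del X) \<otimes> (del E \<otimes> \<one> E)) \<cdot> (copy X \<otimes> copy E)"
    unfolding split copy_tensor by (simp add: comp_eq_precomp[OF swap])
  also have "\<dots> = (proj1 X X \<cdot> copy X) \<otimes> (proj2 E E \<cdot> copy E)"
    unfolding proj1_def proj2_def by (simp add: interchange)
  also have "\<dots> = \<one> (X \<otimes>\<^sub>o E)"
    by (simp add: proj1_copy proj2_copy)
  finally show ?thesis .
qed

lemma proj_tensor_copy_swapped: "(proj2 X E \<otimes> proj1 X E) \<cdot> copy (X \<otimes>\<^sub>o E) = braid C X E"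
proof -
  let ?W = "X \<otimes>\<^sub>o E"
  have "(proj2 X E \<otimes> proj1 X E) \<cdot> copy ?W = (proj2 X E \<otimes> proj1 X E) \<cdot> braid C ?W ?W \<cdot> copy ?W"
    by (simp add: braid_copy)
  also have "\<dots> = braid C X E \<cdot> (proj1 X E \<otimes> proj2 X E) \<cdot> copy ?W"
    using comp2_eq_precomp[OF braid_natural[of "proj1 X E" "proj2 X E"]] by simp
  also have "\<dots> = braid C X E"
    by (simp add: proj_tensor_copy)
  finally show ?thesis .
qed

lemma dilation_copy: "p \<in> hom C A X \<Longrightarrow> dilation C p X (copy X \<cdot> p)"
  unfolding dilation_iff hom_def using comp_eq_precomp[OF proj1_copy, of p] by simp

lemma as_eq_if_dil_eq:
  assumes "p \<in> hom C A X" "f \<in> hom C X Y" "g \<in> hom C X Y" "dil_eq C p f g"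
  shows "as_eq C p f g"
proof -
  have [simp]: "src p = A" "tgt p = X" "src f = X" "tgt f = Y" "src g = X" "tgt g = Y"
    using assms(1-3) unfolding hom_def by auto
  have "(f \<otimes> \<one> X) \<cdot> copy X \<cdot> p = (g \<otimes> \<one> X) \<cdot> copy X \<cdot> p"
    using assms(4) dilation_copy[OF assms(1)] unfolding dil_eq_def by blast
  then have "braid C X Y \<cdot> (\<one> X \<otimes> f) \<cdot> copy X \<cdot> p = braid C X Y \<cdot> (\<one> X \<otimes> g) \<cdot> copy X \<cdot> p"
    using comp_eq_precomp[OF copy_swap[of f X], of p] comp_eq_precomp[OF copy_swap[of g X], of p]
    by simp
  then have "(\<one> X \<otimes> f) \<cdot> copy X \<cdot> p = (\<one> X \<otimes> g) \<cdot> copy X \<cdot> p"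
    by (rule split_mono_cancel[OF braid_braid]) simp_all
  then show ?thesis
    unfolding as_eq_def by simp
qed

lemma marginalize_copy_graph:
  assumes "src h = X"
  shows "(proj2 X E \<otimes> proj2 X (tgt h)) \<cdot> (\<one> (X \<otimes>\<^sub>o E) \<otimes> ((\<one> X \<otimes> h) \<cdot> copy X \<cdot> proj1 X E))
      \<cdot> copy (X \<otimes>\<^sub>o E) = braid C (tgt h) E \<cdot> (h \<otimes> \<one> E)"
proof -
  let ?graph = "(\<one> X \<otimes> h) \<cdot> copy X \<cdot> proj1 X E"
  have "proj2 X (tgt h) \<cdot> ?graph = h \<cdot> proj1 X E"
    using comp_eq_precomp[OF proj2_natural[of X h], of "copy X \<cdot> proj1 X E"]
      comp_eq_precomp[OF proj2_copy[of X], of "proj1 X E"] assms by simp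
  then have "(proj2 X E \<otimes> proj2 X (tgt h)) \<cdot> (\<one> (X \<otimes>\<^sub>o E) \<otimes> ?graph) = proj2 X E \<otimes> (h \<cdot> proj1 X E)"
    using interchange[of "\<one> (X \<otimes>\<^sub>o E)" "proj2 X E" ?graph "proj2 X (tgt h)"] assms by simp
  also have "\<dots> = (\<one> E \<otimes> h) \<cdot> (proj2 X E \<otimes> proj1 X E)"
    using interchange[of "proj2 X E" "\<one> E" "proj1 X E" h] assms by simp
  finally have marginals:
    "(proj2 X E \<otimes> proj2 X (tgt h)) \<cdot> (\<one> (X \<otimes>\<^sub>o E) \<otimes> ?graph) = (\<one> E \<otimes> h) \<cdot> (proj2 X E \<otimes> proj1 X E)" .
  have "(proj2 X E \<otimes> proj2 X (tgt h)) \<cdot> (\<one> (X \<otimes>\<^sub>o E) \<otimes> ?graph) \<cdot> copy (X \<otimes>\<^sub>o E)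
      = (\<one> E \<otimes> h) \<cdot> braid C X E"
    using comp2_eq_precomp[OF marginals, of "copy (X \<otimes>\<^sub>o E)"] assms
    by (simp add: proj_tensor_copy_swapped)
  then show ?thesis
    using braid_natural[of h "\<one> E"] assms by simp
qed

lemma dil_eq_if_as_eq_causal:
  assumes "causal C" "p \<in> hom C A X" "f \<in> hom C X Y" "g \<in> hom C X Y" "as_eq C p f g"
  shows "dil_eq C p f g"
  unfolding dil_eq_def
proof (intro allI impI)
  fix E \<pi>
  assume "dilation C p E \<pi>"
  then have \<pi>: "\<pi> \<in> hom C A (X \<otimes>\<^sub>o E)" and marginal: "proj1 X E \<cdot> \<pi> = p"
    using assms(2) unfolding dilation_iff hom_def by auto
  have [simp]: "tgt p = X" "src \<pi> = A" "tgt \<pi> = X \<otimes>\<^sub>o E" "src f = X" "tgt f = Y" "src g = X" "tgt g = Y"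
    using \<pi> assms(2-4) unfolding hom_def by auto
  have "(\<one> X \<otimes> f) \<cdot> copy X \<cdot> proj1 X E \<cdot> \<pi> = (\<one> X \<otimes> g) \<cdot> copy X \<cdot> proj1 X E \<cdot> \<pi>"
    using assms(5) marginal unfolding as_eq_def by simp
  moreover have "proj1 X E \<in> hom C (X \<otimes>\<^sub>o E) X"
    unfolding hom_def by simp
  ultimately have "(\<one> (X \<otimes>\<^sub>o E) \<otimes> ((\<one> X \<otimes> f) \<cdot> copy X \<cdot> proj1 X E)) \<cdot> copy (X \<otimes>\<^sub>o E) \<cdot> \<pi>
      = (\<one> (X \<otimes>\<^sub>o E) \<otimes> ((\<one> X \<otimes> g) \<cdot> copy X \<cdot> proj1 X E)) \<cdot> copy (X \<otimes>\<^sub>o E) \<cdot> \<pi>"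
    using assms(1,3,4) \<pi> unfolding causal_def by blast
  then have "braid C Y E \<cdot> (f \<otimes> \<one> E) \<cdot> \<pi> = braid C Y E \<cdot> (g \<otimes> \<one> E) \<cdot> \<pi>"
    using comp_eq_precomp[OF marginalize_copy_graph[of f X E], of \<pi>]
      comp_eq_precomp[OF marginalize_copy_graph[of g X E], of \<pi>] by simp
  then show "(f \<otimes> \<one> E) \<cdot> \<pi> = (g \<otimes> \<one> E) \<cdot> \<pi>"
    by (rule split_mono_cancel[OF braid_braid]) simp_all
qed

lemma proj1_assoc: "proj1 X (E \<otimes>\<^sub>o F) \<cdot> assoc C X E F = proj1 X E \<cdot> proj1 (X \<otimes>\<^sub>o E) F"
proof -
  have del: "del (E \<otimes>\<^sub>o F) = del F \<cdot> proj2 E F"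
    by (rule del_unique[symmetric]) simp_all
  have "(\<one> X \<otimes> del (E \<otimes>\<^sub>o F)) \<cdot> assoc C X E F
      = (\<one> X \<otimes> del F) \<cdot> (\<one> X \<otimes> lunit C F) \<cdot> (\<one> X \<otimes> (del E \<otimes> \<one> F)) \<cdot> assoc C X E F"
    unfolding del proj2_def by (simp add: id_tensor_comp)
  also have "\<dots> = (\<one> X \<otimes> del F) \<cdot> (\<one> X \<otimes> lunit C F) \<cdot> assoc C X I F \<cdot> ((\<one> X \<otimes> del E) \<otimes> \<one> F)"
    using assoc_natural[of "\<one> X" "del E" "\<one> F"] by simp
  also have "\<dots> = (\<one> X \<otimes> del F) \<cdot> (proj1 X E \<otimes> \<one> F)"
    unfolding proj1_def using comp_eq_precomp[OF triangle] by (simp add: comp_tensor_id)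
  finally show ?thesis
    using proj1_natural[of "proj1 X E" F] unfolding proj1_def by simp
qed

lemma dilation_copy_comp:
  assumes "f \<in> hom C A W" "g \<in> hom C W X"
  shows "dilation C (g \<cdot> f) (X \<otimes>\<^sub>o W) (assoc C X X W \<cdot> ((copy X \<cdot> g) \<otimes> \<one> W) \<cdot> copy W \<cdot> f)"
proof -
  have [simp]: "src f = A" "tgt f = W" "src g = W" "tgt g = X"
    using assms unfolding hom_def by auto
  have "proj1 X (X \<otimes>\<^sub>o W) \<cdot> assoc C X X W \<cdot> ((copy X \<cdot> g) \<otimes> \<one> W) \<cdot> copy W \<cdot> f
      = proj1 X X \<cdot> proj1 (X \<otimes>\<^sub>o X) W \<cdot> ((copy X \<cdot> g) \<otimes> \<one> W) \<cdot> copy W \<cdot> f"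
    using comp_eq_precomp[OF proj1_assoc] by simp
  also have "\<dots> = proj1 X X \<cdot> copy X \<cdot> g \<cdot> proj1 W W \<cdot> copy W \<cdot> f"
    using comp_eq_precomp[OF proj1_natural[of "copy X \<cdot> g" W]] by simp
  also have "\<dots> = g \<cdot> f"
    using comp_eq_precomp[OF proj1_copy[of X], of "g \<cdot> proj1 W W \<cdot> copy W \<cdot> f"]
      comp_eq_precomp[OF proj1_copy[of W], of f] by simp
  finally show ?thesis
    unfolding dilation_iff hom_def by simp
qed

lemma tensor_dilation_copy_comp:
  assumes [simp]: "src g = W" "tgt g = X" "src h = X" "tgt h = Y"
  shows "(h \<otimes> \<one> (X \<otimes>\<^sub>o W)) \<cdot> assoc C X X W \<cdot> ((copy X \<cdot> g) \<otimes> \<one> W) \<cdot> copy W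
    = assoc C Y X W \<cdot> braid C W (Y \<otimes>\<^sub>o X) \<cdot> (\<one> W \<otimes> braid C X Y)
        \<cdot> (\<one> W \<otimes> ((\<one> X \<otimes> h) \<cdot> copy X \<cdot> g)) \<cdot> copy W"
proof -
  let ?graph = "(\<one> X \<otimes> h) \<cdot> copy X \<cdot> g"
  have "(h \<otimes> \<one> (X \<otimes>\<^sub>o W)) \<cdot> assoc C X X W \<cdot> ((copy X \<cdot> g) \<otimes> \<one> W) \<cdot> copy W
      = assoc C Y X W \<cdot> ((h \<otimes> \<one> X) \<otimes> \<one> W) \<cdot> ((copy X \<cdot> g) \<otimes> \<one> W) \<cdot> copy W"
    using comp2_eq_precomp[OF assoc_natural[of h "\<one> X" "\<one> W"]] by simp
  also have "\<dots> = assoc C Y X W \<cdot> (((h \<otimes> \<one> X) \<cdot> copy X \<cdot> g) \<otimes> \<one> W) \<cdot> copy W"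
    using comp_tensor_id[of "copy X \<cdot> g" "h \<otimes> \<one> X" W] by simp
  also have "\<dots> = assoc C Y X W \<cdot> ((braid C X Y \<cdot> ?graph) \<otimes> \<one> W) \<cdot> copy W"
    using comp_eq_precomp[OF copy_swap[of h X], of g] by simp
  also have "\<dots> = assoc C Y X W \<cdot> (braid C X Y \<otimes> \<one> W) \<cdot> (?graph \<otimes> \<one> W) \<cdot> copy W"
    using comp_tensor_id[of ?graph "braid C X Y" W] by simp
  also have "\<dots> = assoc C Y X W \<cdot> (braid C X Y \<otimes> \<one> W) \<cdot> braid C W (X \<otimes>\<^sub>o Y) \<cdot> (\<one> W \<otimes> ?graph) \<cdot> copy W"
    using copy_swap[of ?graph W] by simp
  also have "\<dots> = assoc C Y X W \<cdot> braid C W (Y \<otimes>\<^sub>o X) \<cdot> (\<one> W \<otimes> braid C X Y) \<cdot> (\<one> W \<otimes> ?graph) \<cdot> copy W"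
    using comp2_eq_precomp[OF braid_natural[of "\<one> W" "braid C X Y"]] by simp
  finally show ?thesis .
qed

lemma causal_if_as_eq_imp_dil_eq:
  assumes "\<forall>A X Y p f g. p \<in> hom C A X \<and> f \<in> hom C X Y \<and> g \<in> hom C X Y \<and>
             as_eq C p f g \<longrightarrow> dil_eq C p f g"
  shows "causal C"
  unfolding causal_def
proof (intro allI impI, elim conjE)
  fix A W X Y f g h1 h2
  assume f: "f \<in> hom C A W" and g: "g \<in> hom C W X" and h1: "h1 \<in> hom C X Y" and h2: "h2 \<in> hom C X Y"
    and graphs_agree: "(\<one> X \<otimes> h1) \<cdot> copy X \<cdot> g \<cdot> f = (\<one> X \<otimes> h2) \<cdot> copy X \<cdot> g \<cdot> f"
  have [simp]: "src f = A" "tgt f = W" "src g = W" "tgt g = X"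
    "src h1 = X" "tgt h1 = Y" "src h2 = X" "tgt h2 = Y"
    using f g h1 h2 unfolding hom_def by auto
  let ?\<pi> = "assoc C X X W \<cdot> ((copy X \<cdot> g) \<otimes> \<one> W) \<cdot> copy W \<cdot> f"
  let ?L = "(\<one> W \<otimes> ((\<one> X \<otimes> h1) \<cdot> copy X \<cdot> g)) \<cdot> copy W \<cdot> f"
  let ?R = "(\<one> W \<otimes> ((\<one> X \<otimes> h2) \<cdot> copy X \<cdot> g)) \<cdot> copy W \<cdot> f"
  have "g \<cdot> f \<in> hom C A X"
    unfolding hom_def by simp
  with assms h1 h2 graphs_agree have "dil_eq C (g \<cdot> f) h1 h2"
    unfolding as_eq_def by simp
  then have "(h1 \<otimes> \<one> (X \<otimes>\<^sub>o W)) \<cdot> ?\<pi> = (h2 \<otimes> \<one> (X \<otimes>\<^sub>o W)) \<cdot> ?\<pi>"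
    using dilation_copy_comp[OF f g] unfolding dil_eq_def by blast
  then have "assoc C Y X W \<cdot> braid C W (Y \<otimes>\<^sub>o X) \<cdot> (\<one> W \<otimes> braid C X Y) \<cdot> ?L
      = assoc C Y X W \<cdot> braid C W (Y \<otimes>\<^sub>o X) \<cdot> (\<one> W \<otimes> braid C X Y) \<cdot> ?R"
    using comp_eq_precomp[OF tensor_dilation_copy_comp[of g W X h1 Y], of f]
      comp_eq_precomp[OF tensor_dilation_copy_comp[of g W X h2 Y], of f] by simp
  then have "braid C W (Y \<otimes>\<^sub>o X) \<cdot> (\<one> W \<otimes> braid C X Y) \<cdot> ?L
      = braid C W (Y \<otimes>\<^sub>o X) \<cdot> (\<one> W \<otimes> braid C X Y) \<cdot> ?R"
    by (rule split_mono_cancel[OF assoc_inv_assoc]) simp_all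
  then have cancelled: "(\<one> W \<otimes> braid C X Y) \<cdot> ?L = (\<one> W \<otimes> braid C X Y) \<cdot> ?R"
    by (rule split_mono_cancel[OF braid_braid]) simp_all
  have "(\<one> W \<otimes> braid C Y X) \<cdot> (\<one> W \<otimes> braid C X Y) = \<one> (W \<otimes>\<^sub>o (X \<otimes>\<^sub>o Y))"
    using id_tensor_comp[of "braid C X Y" "braid C Y X" W] by (simp add: braid_braid)
  from this cancelled show "?L = ?R"
    by (rule split_mono_cancel) simp_all
qed

end

theorem proposition4p3:
  fixes C :: "('o, 'm) mcat"
  assumes "is_markov_category C"
  shows "(\<forall>A X Y p f g. p \<in> hom C A X \<and> f \<in> hom C X Y \<and> g \<in> hom C X Y \<and>
            dil_eq C p f g \<longrightarrow> as_eq C p f g)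
       \<and> ((\<forall>A X Y p f g. p \<in> hom C A X \<and> f \<in> hom C X Y \<and> g \<in> hom C X Y \<and>
            as_eq C p f g \<longrightarrow> dil_eq C p f g) \<longleftrightarrow> causal C)"
proof -
  interpret markov_category C
    by standard (rule assms)
  show ?thesis
    using as_eq_if_dil_eq dil_eq_if_as_eq_causal causal_if_as_eq_imp_dil_eq by blast
qed

end
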